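(* Every pseudoforest $G$ with $\operatorname{cycles}(G)=\kappa(G)$ can be transformed into a unicyclic graph by a sequence of p-switches; that is, there are 2-switches $\tau_1,\dots,\tau_k$ ($k\ge0$) such that, with $G_0=G$ and $G_i=\tau_i(G_{i-1})$, each $\tau_i$ is a p-switch over $G_{i-1}$ and $G_k$ is unicyclic.
   Context: Graphs are finite, simple, undirected, labeled. A unicyclic graph is a connected graph with exactly one cycle; a pseudoforest is a graph each of whose components is a tree or a unicyclic graph. $\kappa(G)$ is the number of connected components and $\operatorname{cycles}(G)$ the number of subgraphs of $G$ isomorphic to a cycle. For vertices $a,b,c,d$, $A=\binom{a\ b}{c\ d}$ is interchangeable in $G$ if $ab,cd\in E(G)$, $\{a,b\}\cap\{c,d\}=\varnothing$, $ac,bd\notin E(G)$; the 2-switch $\tau_A$ sends $G$ to $G-ab-cd+ac+bd$ if $A$ is interchangeable and to $G$ otherwise (trivial). A nontrivial 2-switch $\tau$ over a pseudoforest $G$ is a p-switch if $\tau(G)$ is a pseudoforest. *)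

theory Defs
  imports Main
begin

definition graph :: "'a set \<Rightarrow> 'a set set \<Rightarrow> bool" where
  "graph V E \<longleftrightarrow> finite V \<and> (\<forall>e\<in>E. \<exists>a b. a \<noteq> b \<and> a \<in> V \<and> b \<in> V \<and> e = {a, b})"

definition adj :: "'a set set \<Rightarrow> 'a \<Rightarrow> 'a \<Rightarrow> bool" where
  "adj E x y \<longleftrightarrow> {x, y} \<in> E \<and> x \<noteq> y"

definition reach :: "'a set \<Rightarrow> 'a set set \<Rightarrow> 'a \<Rightarrow> 'a \<Rightarrow> bool" where
  "reach V E x y \<longleftrightarrow> x \<in> V \<and> y \<in> V \<and> (adj E)\<^sup>*\<^sup>* x y"

definition connected_graph :: "'a set \<Rightarrow> 'a set set \<Rightarrow> bool" where
  "connected_graph V E \<longleftrightarrow> V \<noteq> {} \<and> (\<forall>x\<in>V. \<forall>y\<in>V. reach V E x y)"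

definition components :: "'a set \<Rightarrow> 'a set set \<Rightarrow> 'a set set" where
  "components V E = (\<lambda>x. {y. reach V E x y}) ` V"

definition kappa :: "'a set \<Rightarrow> 'a set set \<Rightarrow> nat" where
  "kappa V E = card (components V E)"

text \<open>A subgraph isomorphic to a cycle is determined by its (nonempty) edge set C: the graph
spanned by C is connected and every vertex in it has degree exactly 2 within C (for a finite
simple graph this is exactly a cycle C_n, n >= 3).\<close>
definition is_cycle_subgraph :: "'a set set \<Rightarrow> 'a set set \<Rightarrow> bool" where
  "is_cycle_subgraph E C \<longleftrightarrow> C \<subseteq> E \<and> C \<noteq> {} \<and>
     (\<forall>v\<in>\<Union>C. card {e\<in>C. v \<in> e} = 2) \<and> connected_graph (\<Union>C) C"

definition cycles :: "'a set set \<Rightarrow> nat" where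
  "cycles E = card {C. is_cycle_subgraph E C}"

definition induced_edges :: "'a set set \<Rightarrow> 'a set \<Rightarrow> 'a set set" where
  "induced_edges E W = {e\<in>E. e \<subseteq> W}"

definition unicyclic :: "'a set \<Rightarrow> 'a set set \<Rightarrow> bool" where
  "unicyclic V E \<longleftrightarrow> graph V E \<and> connected_graph V E \<and> cycles E = 1"

definition tree :: "'a set \<Rightarrow> 'a set set \<Rightarrow> bool" where
  "tree V E \<longleftrightarrow> graph V E \<and> connected_graph V E \<and> cycles E = 0"

definition pseudoforest :: "'a set \<Rightarrow> 'a set set \<Rightarrow> bool" where
  "pseudoforest V E \<longleftrightarrow> graph V E \<and>
     (\<forall>W\<in>components V E. tree W (induced_edges E W) \<or> unicyclic W (induced_edges E W))"

definition interchangeable :: "'a set set \<Rightarrow> 'a \<Rightarrow> 'a \<Rightarrow> 'a \<Rightarrow> 'a \<Rightarrow> bool" where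
  "interchangeable E a b c d \<longleftrightarrow> {a, b} \<in> E \<and> {c, d} \<in> E \<and> {a, b} \<inter> {c, d} = {} \<and>
     {a, c} \<notin> E \<and> {b, d} \<notin> E"

definition two_switch :: "'a \<Rightarrow> 'a \<Rightarrow> 'a \<Rightarrow> 'a \<Rightarrow> 'a set set \<Rightarrow> 'a set set" where
  "two_switch a b c d E =
     (if interchangeable E a b c d then (E - {{a, b}, {c, d}}) \<union> {{a, c}, {b, d}} else E)"

definition p_switch :: "'a set \<Rightarrow> 'a set set \<Rightarrow> 'a \<Rightarrow> 'a \<Rightarrow> 'a \<Rightarrow> 'a \<Rightarrow> bool" where
  "p_switch V E a b c d \<longleftrightarrow> pseudoforest V E \<and> interchangeable E a b c d \<and>
     pseudoforest V (two_switch a b c d E)"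

end

theory Submission
  imports Defs
begin

text \<open>
  A pseudoforest has at most one cycle per component, so cycles(G) = kappa(G) forces every
  component to be unicyclic. While there are two components W1, W2 with cycles C1, C2, switch
  an edge ab of C1 with an edge cd of C2 into ac, bd. Then W1 and W2 merge into one component
  and the other components are untouched. The merged component again has exactly one cycle,
  namely (C1 - ab) + (C2 - cd) + {ac, bd}: a cycle crosses the cut between W1 and W2 an even
  number of times, so it uses both new edges or neither; if neither, it is an old cycle that
  avoids C1 and C2 and hence lies in another component; if both, switching back gives a
  2-regular edge set whose parts in W1 and W2 contain cycles, i.e. C1 and C2. Each such
  p-switch lowers kappa by one, so the process ends with a unicyclic graph.
\<close>

section \<open>Connected components\<close>

lemma symp_adj: "symp (adj E)"
  unfolding adj_def by (rule sympI) (auto simp: insert_commute)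

lemma adj_rtranclp_sym: "(adj E)\<^sup>*\<^sup>* x y \<Longrightarrow> (adj E)\<^sup>*\<^sup>* y x"
  using sympD[OF symp_rtranclp[OF symp_adj]] .

lemma adj_rtranclp_mono: "(adj C)\<^sup>*\<^sup>* x y \<Longrightarrow> C \<subseteq> E \<Longrightarrow> (adj E)\<^sup>*\<^sup>* x y"
  using mono_rtranclp[of "adj C" "adj E"] by (auto simp: adj_def)

definition component_of :: "'a set \<Rightarrow> 'a set set \<Rightarrow> 'a \<Rightarrow> 'a set" where
  "component_of V E x = {y. reach V E x y}"

lemma components_eq_image: "components V E = component_of V E ` V"
  unfolding components_def component_of_def ..

context
  fixes V :: "'a set" and E :: "'a set set"
  assumes G: "graph V E"
begin

lemma finite_vertices: "finite V"
  using G unfolding graph_def by simp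

lemma finite_edges: "finite E"
proof (rule finite_subset)
  show "E \<subseteq> Pow V" using G unfolding graph_def by auto
qed (simp add: finite_vertices)

lemma edgeE:
  assumes "e \<in> E"
  obtains x y where "x \<noteq> y" "x \<in> V" "y \<in> V" "e = {x, y}"
  using G assms unfolding graph_def by blast

lemma edge_subset_vertices: "e \<in> E \<Longrightarrow> e \<subseteq> V"
  by (metis edgeE empty_subsetI insert_subset)

lemma adj_rtranclp_in_vertices: "(adj E)\<^sup>*\<^sup>* x y \<Longrightarrow> x \<in> V \<Longrightarrow> y \<in> V"
proof (induction rule: rtranclp_induct)
  case (step y z)
  then show ?case using G unfolding adj_def graph_def by (metis doubleton_eq_iff)
qed

lemma mem_component_of_iff: "x \<in> V \<Longrightarrow> y \<in> component_of V E x \<longleftrightarrow> (adj E)\<^sup>*\<^sup>* x y"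
  unfolding component_of_def reach_def using adj_rtranclp_in_vertices by blast

lemma component_of_self: "x \<in> V \<Longrightarrow> x \<in> component_of V E x"
  by (simp add: mem_component_of_iff)

lemma component_eq_component_of:
  assumes "W \<in> components V E" "x \<in> W"
  shows "x \<in> V" "W = component_of V E x"
proof -
  obtain z where z: "z \<in> V" "W = component_of V E z"
    using assms(1) unfolding components_eq_image by blast
  then have zx: "(adj E)\<^sup>*\<^sup>* z x" using assms(2) mem_component_of_iff by blast
  then show "x \<in> V" using adj_rtranclp_in_vertices z(1) by blast
  have "(adj E)\<^sup>*\<^sup>* x y \<longleftrightarrow> (adj E)\<^sup>*\<^sup>* z y" for y
    using zx adj_rtranclp_sym rtranclp_trans by metis
  then show "W = component_of V E x"
    using z \<open>x \<in> V\<close> by (auto simp: mem_component_of_iff)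
qed

lemma component_subset: "W \<in> components V E \<Longrightarrow> W \<subseteq> V"
  using component_eq_component_of(1) by blast

lemma component_closed: "W \<in> components V E \<Longrightarrow> x \<in> W \<Longrightarrow> (adj E)\<^sup>*\<^sup>* x y \<Longrightarrow> y \<in> W"
  using component_eq_component_of mem_component_of_iff by metis

lemma edge_subset_component:
  assumes W: "W \<in> components V E" and "e \<in> E" "x \<in> e" "x \<in> W"
  shows "e \<subseteq> W"
proof -
  obtain u v where "u \<noteq> v" "e = {u, v}" using \<open>e \<in> E\<close> edgeE by metis
  then have "adj E x y" if "y \<in> e" "y \<noteq> x" for y
    using that assms(2,3) unfolding adj_def by (auto simp: insert_commute)
  then show ?thesis using component_closed[OF W \<open>x \<in> W\<close>] by blast
qed

lemma components_disjoint:
  "W1 \<in> components V E \<Longrightarrow> W2 \<in> components V E \<Longrightarrow> W1 \<noteq> W2 \<Longrightarrow> W1 \<inter> W2 = {}"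
  using component_eq_component_of(2) by blast

lemma finite_components: "finite (components V E)"
  unfolding components_eq_image using finite_vertices by simp

lemma graph_induced_component: "W \<in> components V E \<Longrightarrow> graph W (induced_edges E W)"
  using finite_subset[OF component_subset finite_vertices] G
  unfolding graph_def induced_edges_def by (metis (no_types, lifting) insert_subset mem_Collect_eq)

lemma connected_induced_component:
  assumes W: "W \<in> components V E"
  shows "connected_graph W (induced_edges E W)"
proof -
  have inside: "(adj (induced_edges E W))\<^sup>*\<^sup>* x y \<and> y \<in> W"
    if "(adj E)\<^sup>*\<^sup>* x y" "x \<in> W" for x y
    using that
  proof (induction rule: rtranclp_induct)
    case (step y z)
    then have "{y, z} \<subseteq> W" using edge_subset_component[OF W] unfolding adj_def by blast
    then show ?case
      using step unfolding adj_def induced_edges_def by (auto intro: rtranclp.rtrancl_into_rtrancl)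
  qed simp
  have "W \<noteq> {}" using W unfolding components_eq_image by (auto intro: component_of_self)
  moreover have "(adj (induced_edges E W))\<^sup>*\<^sup>* x y" if "x \<in> W" "y \<in> W" for x y
  proof -
    have "(adj E)\<^sup>*\<^sup>* x y"
      using that component_eq_component_of[OF W \<open>x \<in> W\<close>] mem_component_of_iff by blast
    then show ?thesis using inside \<open>x \<in> W\<close> by blast
  qed
  ultimately show ?thesis by (simp add: connected_graph_def reach_def)
qed

end

section \<open>Two-regular edge sets and cycles\<close>

abbreviation degree :: "'a set set \<Rightarrow> 'a \<Rightarrow> nat" where
  "degree X v \<equiv> card {e\<in>X. v \<in> e}"

definition two_regular :: "'a set set \<Rightarrow> bool" where
  "two_regular X \<longleftrightarrow> (\<forall>v\<in>\<Union>X. degree X v = 2)"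

lemma two_regularD: "two_regular X \<Longrightarrow> v \<in> \<Union>X \<Longrightarrow> degree X v = 2"
  unfolding two_regular_def by blast

definition doubletons :: "'a set set \<Rightarrow> bool" where
  "doubletons X \<longleftrightarrow> (\<forall>e\<in>X. \<exists>x y. x \<noteq> y \<and> e = {x, y})"

lemma doubletonsE:
  assumes "doubletons X" "e \<in> X"
  obtains x y where "x \<noteq> y" "e = {x, y}"
  using assms unfolding doubletons_def by meson

lemma graph_doubletons: "graph V E \<Longrightarrow> doubletons E"
  unfolding graph_def doubletons_def by blast

lemma doubletons_subset: "doubletons E \<Longrightarrow> X \<subseteq> E \<Longrightarrow> doubletons X"
  unfolding doubletons_def by (meson subsetD)

lemma finite_Union_doubletons: "finite X \<Longrightarrow> doubletons X \<Longrightarrow> finite (\<Union>X)"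
  unfolding doubletons_def by (metis finite.emptyI finite.insertI finite_Union)

lemma graph_Union_doubletons: "finite X \<Longrightarrow> doubletons X \<Longrightarrow> graph (\<Union>X) X"
  using finite_Union_doubletons unfolding graph_def doubletons_def by (metis UnionI insertCI)

lemma degree_pos_iff: "finite X \<Longrightarrow> 0 < degree X v \<longleftrightarrow> v \<in> \<Union>X"
  by (auto simp: card_gt_0_iff)

lemma is_cycle_subgraph_iff:
  "is_cycle_subgraph F C \<longleftrightarrow> C \<subseteq> F \<and> C \<noteq> {} \<and> two_regular C \<and> connected_graph (\<Union>C) C"
  unfolding is_cycle_subgraph_def two_regular_def ..

lemma cycle_subgraph_mono: "is_cycle_subgraph F C \<Longrightarrow> C \<subseteq> F' \<Longrightarrow> is_cycle_subgraph F' C"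
  unfolding is_cycle_subgraph_def by blast

lemma cycle_adj_rtranclp: "is_cycle_subgraph F C \<Longrightarrow> x \<in> \<Union>C \<Longrightarrow> y \<in> \<Union>C \<Longrightarrow> (adj C)\<^sup>*\<^sup>* x y"
  unfolding is_cycle_subgraph_def connected_graph_def reach_def by blast

lemma finite_cycle_subgraphs: "finite F \<Longrightarrow> finite {C. is_cycle_subgraph F C}"
  by (rule finite_subset[of _ "Pow F"]) (auto simp: is_cycle_subgraph_def)

lemma cycle_subset_eq:
  assumes C: "is_cycle_subgraph F C" and C': "is_cycle_subgraph F' C'" and "C' \<subseteq> C"
    and "finite C" and "doubletons C"
  shows "C' = C"
proof -
  have stays: "e \<in> C'" if "e \<in> C" "u \<in> e" "u \<in> \<Union>C'" for e u
  proof (rule ccontr)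
    assume "e \<notin> C'"
    then have "{f\<in>C'. u \<in> f} \<subset> {f\<in>C. u \<in> f}" using that \<open>C' \<subseteq> C\<close> by blast
    then have "degree C' u < degree C u" using \<open>finite C\<close> by (simp add: psubset_card_mono)
    moreover have "u \<in> \<Union>C" using that by blast
    ultimately show False
      using that(3) C C' unfolding is_cycle_subgraph_iff two_regular_def by (metis less_irrefl)
  qed
  have closed: "(adj C)\<^sup>*\<^sup>* x y \<Longrightarrow> x \<in> \<Union>C' \<Longrightarrow> y \<in> \<Union>C'" for x y
  proof (induction rule: rtranclp_induct)
    case (step y z)
    then have "{y, z} \<in> C'" using stays unfolding adj_def by blast
    then show ?case by blast
  qed
  obtain e' where "e' \<in> C'" using C' unfolding is_cycle_subgraph_def by blast
  then obtain v w where "e' = {v, w}"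
    using \<open>C' \<subseteq> C\<close> \<open>doubletons C\<close> by (auto elim: doubletonsE)
  then have v: "v \<in> \<Union>C'" using \<open>e' \<in> C'\<close> by auto
  have "e \<in> C'" if "e \<in> C" for e
  proof -
    obtain x y where e: "e = {x, y}" using \<open>e \<in> C\<close> \<open>doubletons C\<close> by (auto elim: doubletonsE)
    have "x \<in> \<Union>C" "v \<in> \<Union>C" using \<open>e \<in> C\<close> e v \<open>C' \<subseteq> C\<close> by auto
    then have "x \<in> \<Union>C'" using cycle_adj_rtranclp[OF C] closed v by blast
    then show ?thesis using stays[OF \<open>e \<in> C\<close>, of x] e by simp
  qed
  then show ?thesis using \<open>C' \<subseteq> C\<close> by blast
qed

lemma two_regular_component_cycle:
  assumes "finite D" "doubletons D" "two_regular D" and W: "W \<in> components (\<Union>D) D"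
  shows "is_cycle_subgraph D (induced_edges D W)"
proof -
  have G: "graph (\<Union>D) D" using graph_Union_doubletons assms(1,2) .
  have touching: "{f\<in>induced_edges D W. u \<in> f} = {f\<in>D. u \<in> f}" if "u \<in> W" for u
    using edge_subset_component[OF G W] that unfolding induced_edges_def by blast
  have "\<Union>(induced_edges D W) = W"
  proof
    show "W \<subseteq> \<Union>(induced_edges D W)"
      using touching component_subset[OF G W] by blast
  qed (auto simp: induced_edges_def)
  moreover have "W \<noteq> {}" using W unfolding components_eq_image
    by (auto intro: component_of_self[OF G])
  ultimately show ?thesis
    using touching component_subset[OF G W] connected_induced_component[OF G W] \<open>two_regular D\<close>
    unfolding is_cycle_subgraph_iff two_regular_def by (auto simp: induced_edges_def)
qed

lemma two_regular_has_cycle: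
  assumes "finite D" "D \<noteq> {}" "doubletons D" "two_regular D"
  obtains C where "is_cycle_subgraph D C"
proof -
  obtain e where "e \<in> D" using assms(2) by blast
  then have "\<Union>D \<noteq> {}" using doubletonsE[OF assms(3)] by (metis UnionI emptyE insertI1)
  then obtain W where "W \<in> components (\<Union>D) D" unfolding components_def by blast
  then show ?thesis using two_regular_component_cycle assms that by blast
qed

lemma even_card_cut_edges:
  assumes "finite C" "doubletons C" "two_regular C"
  shows "even (card {e\<in>C. card (e \<inter> S) = 1})"
proof -
  define T where "T = S \<inter> \<Union>C"
  have "finite T" using finite_Union_doubletons[OF assms(1,2)] unfolding T_def by simp
  have "(\<Sum>e\<in>C. card (e \<inter> S)) = (\<Sum>e\<in>C. card {v\<in>T. v \<in> e})"
    by (rule sum.cong) (auto simp: T_def intro!: arg_cong[where f = card])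
  also have "\<dots> = (\<Sum>v\<in>T. degree C v)"
    using sum.swap_restrict[OF \<open>finite T\<close> \<open>finite C\<close>, of "\<lambda>_ _. 1::nat" "\<lambda>v e. v \<in> e"] by simp
  also have "\<dots> = (\<Sum>v\<in>T. 2)"
    using assms(3) unfolding two_regular_def T_def by (intro sum.cong) auto
  also have "\<dots> = 2 * card T" by simp
  finally have "even (card {e\<in>C. odd (card (e \<inter> S))})"
    using even_sum_iff[OF \<open>finite C\<close>] by (metis dvd_triv_left)
  moreover have "{e\<in>C. odd (card (e \<inter> S))} = {e\<in>C. card (e \<inter> S) = 1}"
  proof (intro Collect_cong conj_cong refl)
    fix e assume "e \<in> C"
    obtain x y where "x \<noteq> y" "e = {x, y}" using \<open>e \<in> C\<close> assms(2) by (auto elim: doubletonsE)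
    then have "card (e \<inter> S) \<le> 2" using card_mono[of e "e \<inter> S"] by simp
    then show "odd (card (e \<inter> S)) \<longleftrightarrow> card (e \<inter> S) = 1" by presburger
  qed
  ultimately show ?thesis by simp
qed

lemma finite_two_switch: "finite X \<Longrightarrow> finite (two_switch a b c d X)"
  unfolding two_switch_def by simp

lemma two_switch_swap_pairs: "two_switch c d a b X = two_switch a b c d X"
  unfolding two_switch_def interchangeable_def by (auto simp: insert_commute)

lemma degree_two_switch:
  assumes X: "interchangeable X a b c d" and "a \<noteq> b" "c \<noteq> d" "finite X"
  shows "degree (two_switch a b c d X) v = degree X v"
proof -
  define Inc Rem Add where "Inc = {e\<in>X. v \<in> e}"
    and "Rem = {e\<in>{{a, b}, {c, d}}. v \<in> e}" and "Add = {e\<in>{{a, c}, {b, d}}. v \<in> e}"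
  have distinct: "a \<noteq> c" "a \<noteq> d" "b \<noteq> c" "b \<noteq> d"
    using X unfolding interchangeable_def by auto
  have "{e\<in>two_switch a b c d X. v \<in> e} = (Inc - Rem) \<union> Add"
    using X unfolding two_switch_def Inc_def Rem_def Add_def by auto
  moreover have "Rem \<subseteq> Inc" "Add \<inter> (Inc - Rem) = {}" "finite Inc" "finite Rem" "finite Add"
    using X \<open>finite X\<close> unfolding interchangeable_def Inc_def Rem_def Add_def by auto
  moreover have "card Rem = card Add"
    \<comment> \<open>each of a, b, c, d loses exactly one edge and gains exactly one\<close>
  proof -
    have pick: "{e\<in>{A, B}. v \<in> e} = (if v \<in> A then {A} else {}) \<union> (if v \<in> B then {B} else {})"
      for A B :: "'a set" by auto
    show ?thesis
      unfolding Rem_def Add_def pick using distinct \<open>a \<noteq> b\<close> \<open>c \<noteq> d\<close> by (auto simp: doubleton_eq_iff)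
  qed
  moreover have "card Rem \<le> card Inc" using calculation by (metis card_mono)
  ultimately show ?thesis
    unfolding Inc_def[symmetric] by (simp add: card_Un_disjoint card_Diff_subset Int_commute)
qed

lemma two_regular_two_switch:
  assumes X: "interchangeable X a b c d" "a \<noteq> b" "c \<noteq> d" "finite X" and "two_regular X"
  shows "two_regular (two_switch a b c d X)"
  unfolding two_regular_def
proof
  fix v assume "v \<in> \<Union>(two_switch a b c d X)"
  then have "0 < degree X v"
    using degree_pos_iff[OF finite_two_switch[OF \<open>finite X\<close>]] degree_two_switch[OF X] by metis
  then have "v \<in> \<Union>X" using degree_pos_iff[OF \<open>finite X\<close>] by blast
  then show "degree (two_switch a b c d X) v = 2"
    using two_regularD[OF \<open>two_regular X\<close>] degree_two_switch[OF X] by simp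
qed

lemma two_regular_Un:
  assumes "two_regular A" "two_regular B" "\<Union>A \<inter> \<Union>B = {}"
  shows "two_regular (A \<union> B)"
  unfolding two_regular_def
proof
  fix v assume "v \<in> \<Union>(A \<union> B)"
  then consider "v \<in> \<Union>A" | "v \<in> \<Union>B" by blast
  then show "degree (A \<union> B) v = 2"
  proof cases
    case 1
    then have "{e\<in>A \<union> B. v \<in> e} = {e\<in>A. v \<in> e}" using assms(3) by blast
    then show ?thesis using two_regularD[OF assms(1) 1] by simp
  next
    case 2
    then have "{e\<in>A \<union> B. v \<in> e} = {e\<in>B. v \<in> e}" using assms(3) by blast
    then show ?thesis using two_regularD[OF assms(2) 2] by simp
  qed
qed

lemma two_regular_restrict:
  assumes "two_regular X" and closed: "\<And>e. e \<in> X \<Longrightarrow> e \<inter> W \<noteq> {} \<Longrightarrow> e \<subseteq> W"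
  shows "two_regular {e\<in>X. e \<subseteq> W}"
  unfolding two_regular_def
proof
  fix v assume v: "v \<in> \<Union>{e\<in>X. e \<subseteq> W}"
  then have "{e\<in>{e\<in>X. e \<subseteq> W}. v \<in> e} = {e\<in>X. v \<in> e}" using closed by blast
  moreover have "v \<in> \<Union>X" using v by blast
  ultimately show "degree {e\<in>X. e \<subseteq> W} v = 2" using two_regularD[OF assms(1)] by simp
qed

lemma cycle_in_component:
  assumes G: "graph V E" and C: "is_cycle_subgraph E C"
  obtains W where "W \<in> components V E" "C \<subseteq> induced_edges E W"
proof -
  have CE: "C \<subseteq> E" using C unfolding is_cycle_subgraph_def by blast
  obtain e where "e \<in> C" using C unfolding is_cycle_subgraph_def by blast
  then have "e \<in> E" using CE by blast
  then obtain v w where "v \<in> V" "e = {v, w}" using edgeE[OF G] by metis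
  define W where "W = component_of V E v"
  have W: "W \<in> components V E" unfolding W_def components_eq_image using \<open>v \<in> V\<close> by blast
  have "f \<subseteq> W" if "f \<in> C" for f
  proof -
    have "f \<in> E" using \<open>f \<in> C\<close> CE by blast
    then obtain p q where "f = {p, q}" using edgeE[OF G] by metis
    then have "(adj C)\<^sup>*\<^sup>* v p"
      using cycle_adj_rtranclp[OF C] \<open>e \<in> C\<close> \<open>e = {v, w}\<close> \<open>f \<in> C\<close> by blast
    then have "p \<in> W"
      using adj_rtranclp_mono[OF _ CE] mem_component_of_iff[OF G \<open>v \<in> V\<close>] unfolding W_def by blast
    then show ?thesis using edge_subset_component[OF G W \<open>f \<in> E\<close>] \<open>f = {p, q}\<close> by blast
  qed
  then show thesis using that W CE unfolding induced_edges_def by blast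
qed

section \<open>Graphs whose components are all unicyclic\<close>

lemma card_Collect_eq_1_iff: "card {x. P x} = 1 \<longleftrightarrow> (\<exists>!x. P x)"
  unfolding card_1_singleton_iff One_nat_def by (auto simp: set_eq_iff)

lemma cycles_eq_1_iff: "cycles E = 1 \<longleftrightarrow> (\<exists>!C. is_cycle_subgraph E C)"
  unfolding cycles_def by (rule card_Collect_eq_1_iff)

definition unicyclic_components :: "'a set \<Rightarrow> 'a set set \<Rightarrow> bool" where
  "unicyclic_components V E \<longleftrightarrow>
     graph V E \<and> (\<forall>W\<in>components V E. \<exists>!C. is_cycle_subgraph (induced_edges E W) C)"

lemma unicyclic_component:
  assumes "unicyclic_components V E" "W \<in> components V E"
  shows "unicyclic W (induced_edges E W)"
proof -
  have G: "graph V E" and "\<exists>!C. is_cycle_subgraph (induced_edges E W) C"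
    using assms unfolding unicyclic_components_def by auto
  then show ?thesis
    unfolding unicyclic_def cycles_eq_1_iff
    using graph_induced_component[OF G assms(2)] connected_induced_component[OF G assms(2)] by simp
qed

lemma pseudoforest_if_unicyclic_components: "unicyclic_components V E \<Longrightarrow> pseudoforest V E"
  unfolding pseudoforest_def using unicyclic_component unicyclic_components_def by metis

lemma unicyclic_if_kappa_eq_1:
  assumes U: "unicyclic_components V E" and "kappa V E = 1"
  shows "unicyclic V E"
proof -
  have G: "graph V E" using U unfolding unicyclic_components_def by blast
  obtain W where K: "components V E = {W}"
    using \<open>kappa V E = 1\<close> unfolding kappa_def by (rule card_1_singletonE)
  have "V \<subseteq> W"
  proof
    fix x assume "x \<in> V"
    then have "component_of V E x = W" using K unfolding components_eq_image by blast
    then show "x \<in> W" using component_of_self[OF G \<open>x \<in> V\<close>] by simp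
  qed
  then have "W = V" using component_subset[OF G] K by blast
  have "induced_edges E V = E"
    unfolding induced_edges_def using edge_subset_vertices[OF G] by blast
  have "unicyclic W (induced_edges E W)" using unicyclic_component[OF U] K by blast
  then show ?thesis unfolding \<open>W = V\<close> \<open>induced_edges E V = E\<close> .
qed

lemma cycles_le_sum_components:
  assumes G: "graph V E"
  shows "cycles E \<le> (\<Sum>W\<in>components V E. cycles (induced_edges E W))"
proof -
  let ?cyc = "\<lambda>F. {C. is_cycle_subgraph F C}"
  have "?cyc E \<subseteq> (\<Union>W\<in>components V E. ?cyc (induced_edges E W))"
  proof
    fix C assume "C \<in> ?cyc E"
    then have C: "is_cycle_subgraph E C" by simp
    obtain W where "W \<in> components V E" "C \<subseteq> induced_edges E W"
      using cycle_in_component[OF G C] .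
    then show "C \<in> (\<Union>W\<in>components V E. ?cyc (induced_edges E W))"
      using cycle_subgraph_mono[OF C] by blast
  qed
  moreover have "finite (?cyc (induced_edges E W))" for W
    using finite_edges[OF G] by (intro finite_cycle_subgraphs) (simp add: induced_edges_def)
  ultimately have "cycles E \<le> card (\<Union>W\<in>components V E. ?cyc (induced_edges E W))"
    unfolding cycles_def using finite_components[OF G] by (intro card_mono) auto
  also have "\<dots> \<le> (\<Sum>W\<in>components V E. cycles (induced_edges E W))"
    unfolding cycles_def using finite_components[OF G] by (rule card_UN_le)
  finally show ?thesis .
qed

lemma unicyclic_components_if_cycles_eq_kappa:
  assumes pf: "pseudoforest V E" and "cycles E = kappa V E"
  shows "unicyclic_components V E"
proof -
  have G: "graph V E" using pf unfolding pseudoforest_def by blast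
  let ?K = "components V E" and ?f = "\<lambda>W. cycles (induced_edges E W)"
  have le1: "?f W \<le> 1" if "W \<in> ?K" for W
    using pf that unfolding pseudoforest_def tree_def unicyclic_def by fastforce
  have "sum ?f ?K \<le> sum (\<lambda>_. 1) ?K" using le1 by (rule sum_mono)
  moreover have "sum (\<lambda>_. 1) ?K = cycles E" using \<open>cycles E = kappa V E\<close> unfolding kappa_def by simp
  ultimately have "sum ?f ?K = sum (\<lambda>_. 1) ?K" using cycles_le_sum_components[OF G] by linarith
  then have "?f W = 1" if "W \<in> ?K" for W
    using sum_mono_inv[OF _ le1 that finite_components[OF G]] by simp
  then show ?thesis unfolding unicyclic_components_def cycles_eq_1_iff using G by blast
qed

section \<open>Merging two unicyclic components by a 2-switch\<close>

locale merging_switch =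
  fixes V :: "'a set" and E :: "'a set set" and W1 W2 :: "'a set"
    and C1 C2 :: "'a set set" and a b c d :: 'a
  assumes U: "unicyclic_components V E"
    and W1: "W1 \<in> components V E" and W2: "W2 \<in> components V E" and W1_ne_W2: "W1 \<noteq> W2"
    and C1: "is_cycle_subgraph (induced_edges E W1) C1"
    and C2: "is_cycle_subgraph (induced_edges E W2) C2"
    and ab: "{a, b} \<in> C1" and cd: "{c, d} \<in> C2"
begin

abbreviation E' :: "'a set set" where
  "E' \<equiv> two_switch a b c d E"

lemma graph_E: "graph V E"
  using U unfolding unicyclic_components_def by blast

lemma W1_W2_disjoint: "W1 \<inter> W2 = {}"
  using components_disjoint[OF graph_E W1 W2 W1_ne_W2] .

lemma C1_subset: "C1 \<subseteq> E" "\<Union>C1 \<subseteq> W1"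
  using C1 unfolding is_cycle_subgraph_def induced_edges_def by blast+

lemma C2_subset: "C2 \<subseteq> E" "\<Union>C2 \<subseteq> W2"
  using C2 unfolding is_cycle_subgraph_def induced_edges_def by blast+

lemma endpoints: "a \<in> W1" "b \<in> W1" "c \<in> W2" "d \<in> W2"
  using ab cd C1_subset(2) C2_subset(2) by blast+

lemma ab_in_E: "{a, b} \<in> E" and cd_in_E: "{c, d} \<in> E"
  using ab cd C1_subset(1) C2_subset(1) by blast+

lemma a_ne_b: "a \<noteq> b" and c_ne_d: "c \<noteq> d"
  using ab_in_E cd_in_E edgeE[OF graph_E] by (metis doubleton_eq_iff)+

lemma ac_notin_E: "{a, c} \<notin> E" and bd_notin_E: "{b, d} \<notin> E"
proof -
  show "{a, c} \<notin> E"
  proof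
    assume "{a, c} \<in> E"
    then have "c \<in> W1" using edge_subset_component[OF graph_E W1 _ _ endpoints(1)] by blast
    then show False using endpoints(3) W1_W2_disjoint by blast
  qed
  show "{b, d} \<notin> E"
  proof
    assume "{b, d} \<in> E"
    then have "d \<in> W1" using edge_subset_component[OF graph_E W1 _ _ endpoints(2)] by blast
    then show False using endpoints(4) W1_W2_disjoint by blast
  qed
qed

lemma interchangeable_E: "interchangeable E a b c d"
  unfolding interchangeable_def
  using ab_in_E cd_in_E ac_notin_E bd_notin_E endpoints W1_W2_disjoint by blast

lemma E'_eq: "E' = E - {{a, b}, {c, d}} \<union> {{a, c}, {b, d}}"
  using interchangeable_E unfolding two_switch_def by simp

lemma graph_E': "graph V E'"
proof -
  have "a \<in> V" "b \<in> V" "c \<in> V" "d \<in> V"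
    using endpoints component_subset[OF graph_E W1] component_subset[OF graph_E W2] by blast+
  moreover have "a \<noteq> c" "b \<noteq> d" using endpoints W1_W2_disjoint by blast+
  ultimately show ?thesis using graph_E unfolding E'_eq graph_def by blast
qed

lemma ab_notin_E': "{a, b} \<notin> E'" and cd_notin_E': "{c, d} \<notin> E'"
  using endpoints W1_W2_disjoint a_ne_b c_ne_d unfolding E'_eq by (auto simp: doubleton_eq_iff)

lemma C1_unique: "is_cycle_subgraph (induced_edges E W1) C \<Longrightarrow> C = C1"
  using U W1 C1 unfolding unicyclic_components_def by blast

lemma C2_unique: "is_cycle_subgraph (induced_edges E W2) C \<Longrightarrow> C = C2"
  using U W2 C2 unfolding unicyclic_components_def by blast

lemma cycle_E'D:
  assumes "is_cycle_subgraph E' C"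
  shows "C \<subseteq> E'" "finite C" "doubletons C" "two_regular C"
proof -
  show "C \<subseteq> E'" using assms unfolding is_cycle_subgraph_def by blast
  then show "finite C" "doubletons C"
    using finite_subset finite_edges[OF graph_E'] doubletons_subset graph_doubletons[OF graph_E']
    by blast+
  show "two_regular C" using assms unfolding is_cycle_subgraph_iff by blast
qed

lemma cycle_E'_ac_iff_bd:
  assumes C: "is_cycle_subgraph E' C"
  shows "{a, c} \<in> C \<longleftrightarrow> {b, d} \<in> C"
proof -
  have crossing: "{e\<in>C. card (e \<inter> W1) = 1} = C \<inter> {{a, c}, {b, d}}"
  proof (intro set_eqI iffI)
    fix e assume e: "e \<in> {e\<in>C. card (e \<inter> W1) = 1}"
    show "e \<in> C \<inter> {{a, c}, {b, d}}"
    proof (rule ccontr)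
      assume "e \<notin> C \<inter> {{a, c}, {b, d}}"
      then have "e \<in> E" using e cycle_E'D(1)[OF C] unfolding E'_eq by blast
      then obtain x y where "x \<noteq> y" "e = {x, y}" using edgeE[OF graph_E] by metis
      moreover have "e \<subseteq> W1" if "e \<inter> W1 \<noteq> {}"
        using that edge_subset_component[OF graph_E W1 \<open>e \<in> E\<close>] by blast
      ultimately have "card (e \<inter> W1) \<in> {0, 2}" by (cases "e \<inter> W1 = {}") (auto simp: Int_absorb2)
      then show False using e by auto
    qed
  next
    fix e assume "e \<in> C \<inter> {{a, c}, {b, d}}"
    moreover have "{a, c} \<inter> W1 = {a}" "{b, d} \<inter> W1 = {b}"
      using endpoints W1_W2_disjoint by blast+
    ultimately show "e \<in> {e\<in>C. card (e \<inter> W1) = 1}" by auto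
  qed
  have "{a, c} \<noteq> {b, d}" using endpoints W1_W2_disjoint a_ne_b by (auto simp: doubleton_eq_iff)
  moreover have "even (card (C \<inter> {{a, c}, {b, d}}))"
    using even_card_cut_edges[OF cycle_E'D(2-4)[OF C], of W1] unfolding crossing .
  ultimately show ?thesis by (cases "{a, c} \<in> C"; cases "{b, d} \<in> C") (auto simp: Int_insert_right)
qed

lemma cycle_E'_avoiding_new_edges:
  assumes C: "is_cycle_subgraph E' C" and "{a, c} \<notin> C"
  shows "\<Union>C \<inter> (W1 \<union> W2) = {}"
proof -
  have "{b, d} \<notin> C" using cycle_E'_ac_iff_bd[OF C] \<open>{a, c} \<notin> C\<close> by blast
  then have "C \<subseteq> E" using cycle_E'D(1)[OF C] \<open>{a, c} \<notin> C\<close> unfolding E'_eq by blast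
  then obtain W where W: "W \<in> components V E" "C \<subseteq> induced_edges E W"
    using cycle_in_component[OF graph_E cycle_subgraph_mono[OF C]] by metis
  then have CW: "is_cycle_subgraph (induced_edges E W) C" using cycle_subgraph_mono[OF C] by blast
  have "W \<noteq> W1" using C1_unique CW ab ab_notin_E' cycle_E'D(1)[OF C] by blast
  moreover have "W \<noteq> W2" using C2_unique CW cd cd_notin_E' cycle_E'D(1)[OF C] by blast
  ultimately have "W \<inter> (W1 \<union> W2) = {}"
    using components_disjoint[OF graph_E W(1) W1] components_disjoint[OF graph_E W(1) W2] by blast
  moreover have "\<Union>C \<subseteq> W" using W(2) unfolding induced_edges_def by blast
  ultimately show ?thesis by blast
qed

lemma C1_in_cycle_E':
  assumes C: "is_cycle_subgraph E' C" and "{a, c} \<in> C" "{b, d} \<in> C"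
  shows "C1 - {{a, b}} \<subseteq> C"
proof -
  \<comment> \<open>Switching back gives a 2-regular subset of E; its part inside W1 contains a cycle
    of W1, which can only be C1.\<close>
  note C_facts = cycle_E'D[OF C]
  let ?B = "two_switch a c b d C"
  have distinct: "a \<noteq> c" "b \<noteq> d" "a \<noteq> d" "c \<noteq> b" using endpoints W1_W2_disjoint by blast+
  have switch_back: "interchangeable C a c b d"
    unfolding interchangeable_def
    using assms(2,3) C_facts(1) ab_notin_E' cd_notin_E' distinct a_ne_b c_ne_d by auto
  have B_eq: "?B = C - {{a, c}, {b, d}} \<union> {{a, b}, {c, d}}"
    using switch_back unfolding two_switch_def by simp
  have "?B \<subseteq> E" using C_facts(1) ab_in_E cd_in_E unfolding B_eq E'_eq by blast
  define D where "D = {e\<in>?B. e \<subseteq> W1}"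
  have "two_regular ?B"
    using two_regular_two_switch[OF switch_back distinct(1,2) C_facts(2,4)] .
  then have reg: "two_regular D"
    unfolding D_def
    by (rule two_regular_restrict) (use \<open>?B \<subseteq> E\<close> edge_subset_component[OF graph_E W1] in blast)
  have D_ind: "D \<subseteq> induced_edges E W1" using \<open>?B \<subseteq> E\<close> unfolding D_def induced_edges_def by blast
  have "{a, b} \<in> D" using endpoints unfolding D_def B_eq by simp
  have "finite D" unfolding D_def using finite_two_switch[OF C_facts(2)] by simp
  have "doubletons D"
    using D_ind doubletons_subset[OF graph_doubletons[OF graph_E]] unfolding induced_edges_def
    by blast
  obtain C' where C': "is_cycle_subgraph D C'"
    using two_regular_has_cycle[OF \<open>finite D\<close> _ \<open>doubletons D\<close> reg] \<open>{a, b} \<in> D\<close> by blast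
  have "C' \<subseteq> D" using C' unfolding is_cycle_subgraph_def by blast
  then have "C1 \<subseteq> D" using C1_unique[OF cycle_subgraph_mono[OF C']] D_ind by blast
  moreover have "{c, d} \<notin> C1" using C1_subset(2) endpoints(3) W1_W2_disjoint by blast
  ultimately show ?thesis unfolding D_def B_eq by blast
qed

lemma merging_switch_swapped: "merging_switch V E W2 W1 C2 C1 c d a b"
  using U W1 W2 W1_ne_W2 C1 C2 ab cd by unfold_locales auto

lemma C2_in_cycle_E':
  assumes C: "is_cycle_subgraph E' C" and "{a, c} \<in> C" "{b, d} \<in> C"
  shows "C2 - {{c, d}} \<subseteq> C"
  using merging_switch.C1_in_cycle_E'[OF merging_switch_swapped] assms
  by (simp add: two_switch_swap_pairs insert_commute)

abbreviation merged :: "'a set set" where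
  "merged \<equiv> two_switch a b c d (C1 \<union> C2)"

lemma interchangeable_C1_C2: "interchangeable (C1 \<union> C2) a b c d"
  using interchangeable_E C1_subset(1) C2_subset(1) ab cd unfolding interchangeable_def by blast

lemma merged_eq: "merged = (C1 - {{a, b}}) \<union> (C2 - {{c, d}}) \<union> {{a, c}, {b, d}}"
proof -
  have "{c, d} \<notin> C1" using C1_subset(2) endpoints(3) W1_W2_disjoint by blast
  moreover have "{a, b} \<notin> C2" using C2_subset(2) endpoints(1) W1_W2_disjoint by blast
  ultimately show ?thesis using interchangeable_C1_C2 unfolding two_switch_def by auto
qed

lemma merged_subset_E': "merged \<subseteq> E'"
  using interchangeable_C1_C2 C1_subset(1) C2_subset(1) interchangeable_E
  unfolding two_switch_def by auto

lemma Union_merged: "\<Union>merged \<subseteq> W1 \<union> W2"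
  using C1_subset(2) C2_subset(2) endpoints unfolding merged_eq by blast

lemma merged_subset_cycle_E':
  assumes C: "is_cycle_subgraph E' C" and "\<Union>C \<inter> (W1 \<union> W2) \<noteq> {}"
  shows "merged \<subseteq> C"
proof -
  have "{a, c} \<in> C" using cycle_E'_avoiding_new_edges[OF C] assms(2) by blast
  moreover have "{b, d} \<in> C" using cycle_E'_ac_iff_bd[OF C] calculation by blast
  ultimately show ?thesis
    using C1_in_cycle_E'[OF C] C2_in_cycle_E'[OF C] unfolding merged_eq by blast
qed

lemma merged_cycle: "is_cycle_subgraph E' merged"
proof -
  have fin: "finite (C1 \<union> C2)"
    using C1_subset(1) C2_subset(1) finite_edges[OF graph_E] finite_subset by blast
  have "two_regular (C1 \<union> C2)"
    using C1 C2 C1_subset(2) C2_subset(2) W1_W2_disjoint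
    by (intro two_regular_Un) (auto simp: is_cycle_subgraph_iff)
  then have reg: "two_regular merged"
    using two_regular_two_switch[OF interchangeable_C1_C2 a_ne_b c_ne_d fin] by blast
  have "finite merged" "doubletons merged"
    using merged_subset_E' finite_edges[OF graph_E'] finite_subset
      doubletons_subset[OF graph_doubletons[OF graph_E']] by blast+
  moreover have "merged \<noteq> {}" unfolding merged_eq by blast
  ultimately obtain C where C: "is_cycle_subgraph merged C"
    using two_regular_has_cycle reg by blast
  have "C \<subseteq> merged" using C unfolding is_cycle_subgraph_def by blast
  then have C': "is_cycle_subgraph E' C"
    using cycle_subgraph_mono[OF C] merged_subset_E' by blast
  obtain e where "e \<in> C" using C unfolding is_cycle_subgraph_def by blast
  then obtain x y where "e = {x, y}" using \<open>C \<subseteq> merged\<close> \<open>doubletons merged\<close>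
    by (auto elim: doubletonsE)
  then have "x \<in> \<Union>C \<inter> (W1 \<union> W2)" using \<open>e \<in> C\<close> \<open>C \<subseteq> merged\<close> Union_merged by blast
  then have "merged \<subseteq> C" using merged_subset_cycle_E'[OF C'] by blast
  then show ?thesis using C' \<open>C \<subseteq> merged\<close> by auto
qed

lemma cycle_E'_meeting_merged_eq:
  assumes C: "is_cycle_subgraph E' C" and "\<Union>C \<inter> (W1 \<union> W2) \<noteq> {}"
  shows "C = merged"
  using cycle_subset_eq[OF C merged_cycle merged_subset_cycle_E'[OF assms]] cycle_E'D(2,3)[OF C]
  by blast

lemma adj_E_imp_E': "adj E x y \<Longrightarrow> (adj E')\<^sup>*\<^sup>* x y"
proof -
  assume xy: "adj E x y"
  show ?thesis
  proof (cases "{x, y} = {a, b} \<or> {x, y} = {c, d}")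
    case True
    then have "x \<in> {a, b, c, d}" "y \<in> {a, b, c, d}" by (auto simp: doubleton_eq_iff)
    moreover have "{a, c} \<in> merged" "{b, d} \<in> merged" unfolding merged_eq by blast+
    ultimately have "x \<in> \<Union>merged" "y \<in> \<Union>merged" by blast+
    then have "(adj merged)\<^sup>*\<^sup>* x y" by (rule cycle_adj_rtranclp[OF merged_cycle])
    then show ?thesis using merged_subset_E' by (rule adj_rtranclp_mono)
  next
    case False
    then have "adj E' x y" using xy unfolding adj_def E'_eq by blast
    then show ?thesis by blast
  qed
qed

lemma rtranclp_E_imp_E': "(adj E)\<^sup>*\<^sup>* x y \<Longrightarrow> (adj E')\<^sup>*\<^sup>* x y"
  by (induction rule: rtranclp_induct) (auto dest: adj_E_imp_E')

lemma merged_component_rtranclp: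
  assumes "x \<in> W1 \<union> W2" "y \<in> W1 \<union> W2"
  shows "(adj E')\<^sup>*\<^sup>* x y"
proof -
  have "adj E' a c" using endpoints W1_W2_disjoint unfolding adj_def E'_eq by blast
  have from_a: "(adj E')\<^sup>*\<^sup>* a z" if "z \<in> W1 \<union> W2" for z
  proof (cases "z \<in> W1")
    case True
    then have "(adj E)\<^sup>*\<^sup>* a z"
      using component_eq_component_of[OF graph_E W1 endpoints(1)] mem_component_of_iff[OF graph_E]
      by blast
    then show ?thesis by (rule rtranclp_E_imp_E')
  next
    case False
    then have "(adj E)\<^sup>*\<^sup>* c z"
      using that component_eq_component_of[OF graph_E W2 endpoints(3)] mem_component_of_iff[OF graph_E]
      by blast
    then show ?thesis using \<open>adj E' a c\<close> rtranclp_E_imp_E'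
      by (meson converse_rtranclp_into_rtranclp)
  qed
  show ?thesis using from_a[OF assms(1)] from_a[OF assms(2)] adj_rtranclp_sym rtranclp_trans
    by metis
qed

lemma rtranclp_E'_imp:
  "(adj E')\<^sup>*\<^sup>* x y \<Longrightarrow> (adj E)\<^sup>*\<^sup>* x y \<or> (x \<in> W1 \<union> W2 \<and> y \<in> W1 \<union> W2)"
proof (induction rule: rtranclp_induct)
  case (step y z)
  have W12_closed: "u \<in> W1 \<union> W2" if "(adj E)\<^sup>*\<^sup>* v u" "v \<in> W1 \<union> W2" for u v
    using that component_closed[OF graph_E W1] component_closed[OF graph_E W2] by blast
  show ?case
  proof (cases "{y, z} = {a, c} \<or> {y, z} = {b, d}")
    case True
    then have "y \<in> W1 \<union> W2" "z \<in> W1 \<union> W2" using endpoints by (auto simp: doubleton_eq_iff)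
    moreover have "x \<in> W1 \<union> W2"
      using step.IH W12_closed[of y x] adj_rtranclp_sym[of E x y] calculation by blast
    ultimately show ?thesis by blast
  next
    case False
    then have "adj E y z" using step.hyps(2) unfolding adj_def E'_eq by blast
    then show ?thesis
      using step.IH W12_closed[of y z] by (meson rtranclp.rtrancl_into_rtrancl r_into_rtranclp)
  qed
qed simp

lemma component_of_E':
  assumes "x \<in> V"
  shows "component_of V E' x = (if x \<in> W1 \<union> W2 then W1 \<union> W2 else component_of V E x)"
proof (cases "x \<in> W1 \<union> W2")
  case True
  have "W1 \<union> W2 \<subseteq> V" using component_subset[OF graph_E W1] component_subset[OF graph_E W2] by blast
  then have "y \<in> component_of V E' x \<longleftrightarrow> y \<in> W1 \<union> W2" for y
    using True rtranclp_E'_imp merged_component_rtranclp mem_component_of_iff[OF graph_E' assms]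
      component_closed[OF graph_E W1] component_closed[OF graph_E W2] by blast
  then show ?thesis using True by auto
next
  case False
  then have "y \<in> component_of V E' x \<longleftrightarrow> y \<in> component_of V E x" for y
    using rtranclp_E'_imp rtranclp_E_imp_E' mem_component_of_iff[OF graph_E' assms]
      mem_component_of_iff[OF graph_E assms] by blast
  then show ?thesis using False by auto
qed

lemma other_component_disjoint:
  "W \<in> components V E \<Longrightarrow> W \<notin> {W1, W2} \<Longrightarrow> W \<inter> (W1 \<union> W2) = {}"
  using components_disjoint[OF graph_E _ W1] components_disjoint[OF graph_E _ W2] by blast

lemma components_E': "components V E' = insert (W1 \<union> W2) (components V E - {W1, W2})"
proof (intro set_eqI iffI)
  fix W assume "W \<in> components V E'"
  then obtain x where x: "x \<in> V" "W = component_of V E' x" unfolding components_eq_image by blast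
  show "W \<in> insert (W1 \<union> W2) (components V E - {W1, W2})"
  proof (cases "x \<in> W1 \<union> W2")
    case False
    then have "W = component_of V E x" "x \<in> W" using x component_of_E' component_of_self[OF graph_E]
      by auto
    then show ?thesis using False x(1) unfolding components_eq_image by auto
  qed (use x component_of_E' in simp)
next
  fix W assume W: "W \<in> insert (W1 \<union> W2) (components V E - {W1, W2})"
  show "W \<in> components V E'"
  proof (cases "W = W1 \<union> W2")
    case True
    have "a \<in> V" using endpoints(1) component_subset[OF graph_E W1] by blast
    then show ?thesis using True component_of_E' endpoints(1) unfolding components_eq_image by force
  next
    case False
    then have "W \<in> components V E" "W \<inter> (W1 \<union> W2) = {}" using W other_component_disjoint by auto
    then obtain x where "x \<in> V" "W = component_of V E x" unfolding components_eq_image by blast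
    moreover have "x \<notin> W1 \<union> W2"
      using calculation \<open>W \<inter> (W1 \<union> W2) = {}\<close> component_of_self[OF graph_E] by blast
    ultimately show ?thesis using component_of_E' unfolding components_eq_image by force
  qed
qed

lemma kappa_E'_less: "kappa V E' < kappa V E"
proof -
  let ?K = "components V E"
  have "W1 \<union> W2 \<noteq> W1" "W1 \<union> W2 \<noteq> W2"
    using W1_W2_disjoint endpoints by blast+
  then have "W1 \<union> W2 \<notin> ?K - {W1, W2}"
    using other_component_disjoint endpoints by blast
  then have "kappa V E' = Suc (card (?K - {W1, W2}))"
    unfolding kappa_def components_E' using finite_components[OF graph_E] by simp
  also have "\<dots> < card ?K"
  proof -
    have "card {W1, W2} \<le> card ?K" using W1 W2 finite_components[OF graph_E]
      by (intro card_mono) auto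
    then show ?thesis using W1 W2 W1_ne_W2 finite_components[OF graph_E]
      by (simp add: card_Diff_subset)
  qed
  finally show ?thesis unfolding kappa_def .
qed

lemma induced_edges_E'_other:
  assumes "W \<inter> (W1 \<union> W2) = {}"
  shows "induced_edges E' W = induced_edges E W"
proof -
  have "\<not> {a, b} \<subseteq> W" "\<not> {c, d} \<subseteq> W" "\<not> {a, c} \<subseteq> W" "\<not> {b, d} \<subseteq> W"
    using assms endpoints by blast+
  then show ?thesis unfolding induced_edges_def E'_eq by blast
qed

lemma unicyclic_components_E': "unicyclic_components V E'"
  unfolding unicyclic_components_def
proof (intro conjI ballI graph_E')
  fix W assume "W \<in> components V E'"
  then consider "W = W1 \<union> W2" | "W \<in> components V E" "W \<inter> (W1 \<union> W2) = {}"
    unfolding components_E' using other_component_disjoint by blast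
  then show "\<exists>!C. is_cycle_subgraph (induced_edges E' W) C"
  proof cases
    case 1
    have "merged \<subseteq> induced_edges E' W"
      using merged_subset_E' Union_merged unfolding 1 induced_edges_def by blast
    moreover have "C = merged" if C_W: "is_cycle_subgraph (induced_edges E' W) C" for C
    proof (rule cycle_E'_meeting_merged_eq)
      show C: "is_cycle_subgraph E' C"
        using C_W cycle_subgraph_mono unfolding is_cycle_subgraph_def induced_edges_def by blast
      obtain e where "e \<in> C" "e \<subseteq> W" using C_W unfolding is_cycle_subgraph_def induced_edges_def
        by blast
      moreover obtain x y where "e = {x, y}" using \<open>e \<in> C\<close> cycle_E'D(3)[OF C]
        by (auto elim: doubletonsE)
      ultimately show "\<Union>C \<inter> (W1 \<union> W2) \<noteq> {}" unfolding 1 by blast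
    qed
    ultimately show ?thesis using cycle_subgraph_mono[OF merged_cycle] by blast
  next
    case 2
    then show ?thesis using U induced_edges_E'_other unfolding unicyclic_components_def by simp
  qed
qed

lemma p_switch_merging: "p_switch V E a b c d"
  unfolding p_switch_def
  using interchangeable_E U unicyclic_components_E' pseudoforest_if_unicyclic_components by blast

end

definition p_switch_step :: "'a set \<Rightarrow> 'a set set \<Rightarrow> 'a set set \<Rightarrow> bool" where
  "p_switch_step V E E' \<longleftrightarrow> (\<exists>a b c d. p_switch V E a b c d \<and> E' = two_switch a b c d E)"

lemma p_switch_step_merging_components:
  assumes U: "unicyclic_components V E" and "2 \<le> kappa V E"
  obtains E' where "p_switch_step V E E'" "unicyclic_components V E'" "kappa V E' < kappa V E"
proof -
  have graph_E: "graph V E" using U unfolding unicyclic_components_def by blast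
  obtain W1 W2 where W: "W1 \<in> components V E" "W2 \<in> components V E" "W1 \<noteq> W2"
    using \<open>2 \<le> kappa V E\<close> card_le_Suc0_iff_eq[OF finite_components[OF graph_E]]
    unfolding kappa_def by fastforce
  obtain C1 C2 where C1: "is_cycle_subgraph (induced_edges E W1) C1"
    and C2: "is_cycle_subgraph (induced_edges E W2) C2"
    using U W unfolding unicyclic_components_def by metis
  have "C1 \<subseteq> E" "C2 \<subseteq> E"
    using C1 C2 unfolding is_cycle_subgraph_def induced_edges_def by blast+
  then have "doubletons C1" "doubletons C2"
    using doubletons_subset[OF graph_doubletons[OF graph_E]] by blast+
  moreover obtain e1 e2 where "e1 \<in> C1" "e2 \<in> C2"
    using C1 C2 unfolding is_cycle_subgraph_def by blast
  ultimately obtain a b c d where "{a, b} \<in> C1" "{c, d} \<in> C2"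
    by (metis doubletonsE)
  then interpret merging_switch V E W1 W2 C1 C2 a b c d
    using U W C1 C2 by unfold_locales
  show thesis
    using that p_switch_step_def p_switch_merging unicyclic_components_E' kappa_E'_less by blast
qed

lemma p_switch_steps_to_unicyclic:
  assumes "unicyclic_components V E" "V \<noteq> {}"
  shows "\<exists>E'. (p_switch_step V)\<^sup>*\<^sup>* E E' \<and> unicyclic V E'"
  using assms(1)
proof (induction "kappa V E" arbitrary: E rule: less_induct)
  case less
  have graph_E: "graph V E" using less.prems unfolding unicyclic_components_def by blast
  have "components V E \<noteq> {}" using \<open>V \<noteq> {}\<close> unfolding components_def by blast
  then have "1 \<le> kappa V E"
    unfolding kappa_def using finite_components[OF graph_E] by (simp add: Suc_leI card_gt_0_iff)
  show ?case
  proof (cases "kappa V E = 1")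
    case True
    then show ?thesis using unicyclic_if_kappa_eq_1[OF less.prems] by blast
  next
    case False
    then obtain E' where
      step: "p_switch_step V E E'" "unicyclic_components V E'" "kappa V E' < kappa V E"
      using p_switch_step_merging_components[OF less.prems] \<open>1 \<le> kappa V E\<close>
      by (metis Suc_1 Suc_leI le_neq_implies_less)
    then obtain E'' where "(p_switch_step V)\<^sup>*\<^sup>* E' E''" "unicyclic V E''"
      using less.hyps by blast
    then show ?thesis using step(1) converse_rtranclp_into_rtranclp by metis
  qed
qed

theorem lemma5p5:
  fixes V :: "'a set" and E :: "'a set set"
  assumes "V \<noteq> {}"
    and "pseudoforest V E"
    and "cycles E = kappa V E"
  shows "\<exists>(k::nat) (Es :: nat \<Rightarrow> 'a set set). Es 0 = E \<and>
           (\<forall>i<k. \<exists>a b c d. p_switch V (Es i) a b c d \<and> Es (Suc i) = two_switch a b c d (Es i)) \<and>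
           unicyclic V (Es k)"
proof -
  have "unicyclic_components V E"
    using unicyclic_components_if_cycles_eq_kappa assms(2,3) .
  then obtain E' where "(p_switch_step V)\<^sup>*\<^sup>* E E'" "unicyclic V E'"
    using p_switch_steps_to_unicyclic assms(1) by blast
  then obtain k Es where "Es 0 = E" "Es k = E'" "\<forall>i<k. p_switch_step V (Es i) (Es (Suc i))"
    unfolding rtranclp_power relpowp_fun_conv by blast
  then show ?thesis using \<open>unicyclic V E'\<close> unfolding p_switch_step_def by blast
qed

end
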